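(* Let $X\subset\mathbb{P}^3$ be an irreducible surface of degree at least two, not a cone, with $\operatorname{trop}(X)$ smooth. Let $F$ be a two-dimensional cell of $\operatorname{trop}(X)$ such that $e_i\notin\langle F\rangle$ for all $i\in\{0,1,2,3\}$. Then for every $p$ in the relative interior of $F$, the only tropical tangent at $p$ is $-p$.
   Context: $\mathbb{K}$ algebraically closed of characteristic zero with nontrivial non-Archimedean valuation $\nu$ trivial on integers; tropicalization is $-\nu$ coordinatewise followed by Euclidean closure. $X=V(f)$ with $f$ involving all variables; torus coordinates $x_i/x_0$ on $\mathbb{P}^3$ and $y_i/y_0$ on the dual space. $\operatorname{trop}(X)\subset\mathbb{R}^3$ carries the polyhedral structure dual to the regular subdivision of the Newton polytope induced by the valuations of the coefficients of $f$; smooth means this subdivision is a unimodular triangulation. $e_1,e_2,e_3$ standard basis, $e_0=-e_1-e_2-e_3$; $\langle F\rangle$ is the linear span of differences of points of $F$. A tropical tangent at $p$ is a point $q\in\mathbb{R}^3$ such that some smooth $x\in X\cap(\mathbb{K}^* )^3$ with $\operatorname{trop}(x)=p$ has tangent plane lying in the dual torus and tropicalizing to $q$. *)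

theory Defs
  imports "HOL-Analysis.Analysis" "HOL-Library.Poly_Mapping"
    "HOL-Computational_Algebra.Polynomial" "HOL-Computational_Algebra.Factorial_Ring"
begin

text \<open>Homogeneous polynomials in the variables x0,x1,x2,x3 over a field 'k are represented as
  elements of the polynomial ring ((nat =>0 nat) =>0 'k) (exponent vectors are finitely
  supported functions nat =>0 nat) whose monomials only involve the variables 0..3.\<close>

type_synonym 'k mpoly = "(nat \<Rightarrow>\<^sub>0 nat) \<Rightarrow>\<^sub>0 'k"

definition alg_closed :: "'k::field itself \<Rightarrow> bool" where
  "alg_closed _ \<longleftrightarrow> (\<forall>p::'k poly. degree p \<ge> 1 \<longrightarrow> (\<exists>x. poly p x = 0))"

text \<open>Nontrivial non-Archimedean valuation, trivial on integers; v is only meaningful on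
  nonzero elements (v 0 plays the role of infinity and is never used).\<close>
definition nonarch_valuation :: "('k::field_char_0 \<Rightarrow> real) \<Rightarrow> bool" where
  "nonarch_valuation v \<longleftrightarrow>
     (\<forall>x y. x \<noteq> 0 \<longrightarrow> y \<noteq> 0 \<longrightarrow> v (x * y) = v x + v y) \<and>
     (\<forall>x y. x \<noteq> 0 \<longrightarrow> y \<noteq> 0 \<longrightarrow> x + y \<noteq> 0 \<longrightarrow> v (x + y) \<ge> min (v x) (v y)) \<and>
     (\<exists>x. x \<noteq> 0 \<and> v x \<noteq> 0) \<and>
     (\<forall>n::int. n \<noteq> 0 \<longrightarrow> v (of_int n) = 0)"

definition poly4 :: "'k::zero mpoly \<Rightarrow> bool" where
  "poly4 f \<longleftrightarrow> (\<forall>\<alpha>\<in>Poly_Mapping.keys f. Poly_Mapping.keys \<alpha> \<subseteq> {0..(3::nat)})"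

definition homogeneous_of_degree :: "nat \<Rightarrow> 'k::zero mpoly \<Rightarrow> bool" where
  "homogeneous_of_degree d f \<longleftrightarrow> (\<forall>\<alpha>\<in>Poly_Mapping.keys f. (\<Sum>i\<le>3. Poly_Mapping.lookup \<alpha> i) = d)"

definition involves_all_vars :: "'k::zero mpoly \<Rightarrow> bool" where
  "involves_all_vars f \<longleftrightarrow> (\<forall>i\<le>3. \<exists>\<alpha>\<in>Poly_Mapping.keys f. Poly_Mapping.lookup \<alpha> i > 0)"

definition eval4 :: "'k::comm_ring_1 mpoly \<Rightarrow> (nat \<Rightarrow> 'k) \<Rightarrow> 'k" where
  "eval4 f x = (\<Sum>\<alpha>\<in>Poly_Mapping.keys f. Poly_Mapping.lookup f \<alpha> * (\<Prod>j\<le>3. x j ^ Poly_Mapping.lookup \<alpha> j))"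

definition deval4 :: "nat \<Rightarrow> 'k::comm_ring_1 mpoly \<Rightarrow> (nat \<Rightarrow> 'k) \<Rightarrow> 'k" where
  "deval4 i f x = (\<Sum>\<alpha>\<in>Poly_Mapping.keys f. Poly_Mapping.lookup f \<alpha> * of_nat (Poly_Mapping.lookup \<alpha> i) *
        (\<Prod>j\<le>3. x j ^ (if j = i then Poly_Mapping.lookup \<alpha> j - 1 else Poly_Mapping.lookup \<alpha> j)))"

definition is_cone :: "'k::comm_ring_1 mpoly \<Rightarrow> bool" where
  "is_cone f \<longleftrightarrow> (\<exists>a::nat \<Rightarrow> 'k. (\<exists>i\<le>3. a i \<noteq> 0) \<and>
      (\<forall>x. eval4 f x = 0 \<longrightarrow> (\<forall>s t. eval4 f (\<lambda>i. s * x i + t * a i) = 0)))"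

definition Xtorus :: "'k::comm_ring_1 mpoly \<Rightarrow> (nat \<Rightarrow> 'k) set" where
  "Xtorus f = {x. x 0 = 1 \<and> x 1 \<noteq> 0 \<and> x 2 \<noteq> 0 \<and> x 3 \<noteq> 0 \<and> eval4 f x = 0}"

definition trop_pt :: "('k \<Rightarrow> real) \<Rightarrow> (nat \<Rightarrow> 'k) \<Rightarrow> real \<times> real \<times> real" where
  "trop_pt v x = (- v (x 1), - v (x 2), - v (x 3))"

definition tropX :: "('k::comm_ring_1 \<Rightarrow> real) \<Rightarrow> 'k mpoly \<Rightarrow> (real \<times> real \<times> real) set" where
  "tropX v f = closure (trop_pt v ` Xtorus f)"

text \<open>Tropical polynomial term of the monomial alpha at w (homogeneous coordinates (0,w)),
  and the initial set: monomials attaining the maximum.  These sets are exactly the cells of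
  the regular subdivision of the Newton polytope induced by the valuations.\<close>
definition trop_term :: "('k::zero \<Rightarrow> real) \<Rightarrow> 'k mpoly \<Rightarrow> real \<times> real \<times> real \<Rightarrow> (nat \<Rightarrow>\<^sub>0 nat) \<Rightarrow> real" where
  "trop_term v f w \<alpha> = - v (Poly_Mapping.lookup f \<alpha>) + real (Poly_Mapping.lookup \<alpha> 1) * fst w
      + real (Poly_Mapping.lookup \<alpha> 2) * fst (snd w) + real (Poly_Mapping.lookup \<alpha> 3) * snd (snd w)"

definition init_set :: "('k::zero \<Rightarrow> real) \<Rightarrow> 'k mpoly \<Rightarrow> real \<times> real \<times> real \<Rightarrow> (nat \<Rightarrow>\<^sub>0 nat) set" where
  "init_set v f w = {\<alpha>\<in>Poly_Mapping.keys f. trop_term v f w \<alpha> = Max (trop_term v f w ` Poly_Mapping.keys f)}"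

text \<open>Polyhedral structure on trop(X) dual to the regular subdivision: the cell dual to a
  subdivision cell S (with at least two points) is the closure of {w. init_set w = S}.\<close>
definition trop_cells :: "('k::zero \<Rightarrow> real) \<Rightarrow> 'k mpoly \<Rightarrow> (real \<times> real \<times> real) set set" where
  "trop_cells v f = {closure {w. init_set v f w = S} | S.
        {w. init_set v f w = S} \<noteq> {} \<and> card S \<ge> 2}"

text \<open>Lattice points of the Newton polytope: since f is homogeneous we project
  (a0,a1,a2,a3) to (a1,a2,a3), a lattice isomorphism of the hyperplane onto Z^3.\<close>
definition proj3 :: "(nat \<Rightarrow>\<^sub>0 nat) \<Rightarrow> real \<times> real \<times> real" where
  "proj3 \<alpha> = (real (Poly_Mapping.lookup \<alpha> 1), real (Poly_Mapping.lookup \<alpha> 2), real (Poly_Mapping.lookup \<alpha> 3))"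

definition int_point :: "real \<times> real \<times> real \<Rightarrow> bool" where
  "int_point z \<longleftrightarrow> fst z \<in> \<int> \<and> fst (snd z) \<in> \<int> \<and> snd (snd z) \<in> \<int>"

definition unimodular_simplex :: "(nat \<Rightarrow>\<^sub>0 nat) set \<Rightarrow> bool" where
  "unimodular_simplex S \<longleftrightarrow> inj_on proj3 S \<and> \<not> affine_dependent (proj3 ` S) \<and>
     (\<forall>\<beta>0\<in>S. \<forall>z. int_point z \<and> z \<in> span {proj3 \<beta> - proj3 \<beta>0 | \<beta>. \<beta> \<in> S} \<longrightarrow>
        (\<exists>c. (\<forall>\<beta>\<in>S. c \<beta> \<in> \<int>) \<and> z = (\<Sum>\<beta>\<in>S. c \<beta> *\<^sub>R (proj3 \<beta> - proj3 \<beta>0))))"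

text \<open>trop(X) smooth: the regular subdivision is a unimodular triangulation, i.e. every cell
  of the subdivision is a unimodular simplex all of whose marked points are vertices.\<close>
definition trop_smooth :: "('k::zero \<Rightarrow> real) \<Rightarrow> 'k mpoly \<Rightarrow> bool" where
  "trop_smooth v f \<longleftrightarrow> (\<forall>w. unimodular_simplex (init_set v f w))"

definition lin_span_cell :: "(real \<times> real \<times> real) set \<Rightarrow> (real \<times> real \<times> real) set" where
  "lin_span_cell F = span {x - y | x y. x \<in> F \<and> y \<in> F}"

definition std_e :: "nat \<Rightarrow> real \<times> real \<times> real" where
  "std_e i = (if i = 1 then (1,0,0) else if i = 2 then (0,1,0) else if i = 3 then (0,0,1)
              else (-1,-1,-1))"

text \<open>Tropical tangent at p: tropicalization of the tangent plane [df/dx0 : ... : df/dx3]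
  at a smooth point x of X in the torus with trop x = p, the tangent plane lying in the dual
  torus (all partial derivatives nonzero); dual torus coordinates y_i / y_0.\<close>
definition tropical_tangent :: "('k::field \<Rightarrow> real) \<Rightarrow> 'k mpoly \<Rightarrow> real \<times> real \<times> real
    \<Rightarrow> real \<times> real \<times> real \<Rightarrow> bool" where
  "tropical_tangent v f p q \<longleftrightarrow> (\<exists>x\<in>Xtorus f. trop_pt v x = p \<and>
      (\<exists>i\<le>3. deval4 i f x \<noteq> 0) \<and> (\<forall>i\<le>3. deval4 i f x \<noteq> 0) \<and>
      q = (- v (deval4 1 f x / deval4 0 f x), - v (deval4 2 f x / deval4 0 f x),
           - v (deval4 3 f x / deval4 0 f x)))"

end

theory Submission
  imports Defs
begin

text \<open>A point \<open>p\<close> in the relative interior of a two-dimensional cell \<open>F\<close> of a smooth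
  tropical surface sees exactly two monomials \<open>\<alpha>, \<beta>\<close> of \<open>f\<close>, an edge of the unimodular
  triangulation, and \<open>\<langle>F\<rangle>\<close> is the plane orthogonal to \<open>\<alpha> - \<beta>\<close>.  So \<open>e\<^sub>i \<notin> \<langle>F\<rangle>\<close>
  means \<open>\<alpha>\<^sub>i \<noteq> \<beta>\<^sub>i\<close> for every \<open>i\<close>.  At a point \<open>x \<in> X\<close> with \<open>trop x = p\<close> the terms
  \<open>c\<^sub>\<alpha>x\<^sup>\<alpha>\<close> and \<open>c\<^sub>\<beta>x\<^sup>\<beta>\<close> of \<open>f(x) = 0\<close> have equal and minimal valuation, so they cancel to
  leading order, while in \<open>x\<^sub>i \<partial>f/\<partial>x\<^sub>i = \<Sum> \<alpha>\<^sub>i c\<^sub>\<alpha>x\<^sup>\<alpha>\<close> they survive as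
  \<open>(\<alpha>\<^sub>i - \<beta>\<^sub>i) c\<^sub>\<alpha>x\<^sup>\<alpha>\<close>.  Hence \<open>\<nu>(\<partial>f/\<partial>x\<^sub>i) = \<nu>(c\<^sub>\<alpha>x\<^sup>\<alpha>) - \<nu>(x\<^sub>i)\<close> for all \<open>i\<close>, and the
  tangent plane tropicalizes to \<open>-p\<close>.\<close>

section \<open>Non-Archimedean valuations\<close>

lemma sum_remove_two:
  assumes "finite K" "a \<in> K" "b \<in> K" "a \<noteq> b"
  shows "sum g K = g a + g b + sum g (K - {a, b})"
proof -
  have "sum g K = g a + sum g (K - {a})" using assms by (simp add: sum.remove)
  also have "sum g (K - {a}) = g b + sum g (K - {a} - {b})" using assms by (simp add: sum.remove)
  also have "K - {a} - {b} = K - {a, b}" by auto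
  finally show ?thesis by (simp add: add.assoc)
qed

locale nonarch_valued_field =
  fixes v :: "'k::field_char_0 \<Rightarrow> real"
  assumes valuation: "nonarch_valuation v"
begin

lemma v_mult: "x \<noteq> 0 \<Longrightarrow> y \<noteq> 0 \<Longrightarrow> v (x * y) = v x + v y"
  using valuation unfolding nonarch_valuation_def by blast

lemma v_add_ge_min: "x \<noteq> 0 \<Longrightarrow> y \<noteq> 0 \<Longrightarrow> x + y \<noteq> 0 \<Longrightarrow> min (v x) (v y) \<le> v (x + y)"
  using valuation unfolding nonarch_valuation_def by blast

lemma v_of_int: "n \<noteq> 0 \<Longrightarrow> v (of_int n) = 0"
  using valuation unfolding nonarch_valuation_def by blast

lemma v_one: "v 1 = 0"
  using v_of_int[of 1] by simp

lemma v_of_nat: "n \<noteq> 0 \<Longrightarrow> v (of_nat n) = 0"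
  using v_of_int[of "int n"] by simp

lemma v_uminus: "x \<noteq> 0 \<Longrightarrow> v (- x) = v x"
  using v_mult[of "-1" x] v_of_int[of "-1"] by simp

lemma v_power: "x \<noteq> 0 \<Longrightarrow> v (x ^ n) = real n * v x"
  by (induction n) (auto simp: v_one v_mult algebra_simps)

lemma v_divide: "x \<noteq> 0 \<Longrightarrow> y \<noteq> 0 \<Longrightarrow> v (x / y) = v x - v y"
  using v_mult[of "x / y" y] by simp

text \<open>\<open>val_above m y\<close> says \<open>\<nu>(y) > m\<close>, reading \<open>\<nu>(0) = \<infinity>\<close>.\<close>
definition val_above :: "real \<Rightarrow> 'k \<Rightarrow> bool" where
  "val_above m y \<longleftrightarrow> y = 0 \<or> m < v y"

lemma val_above_add: "val_above m x \<Longrightarrow> val_above m y \<Longrightarrow> val_above m (x + y)"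
  unfolding val_above_def using v_add_ge_min[of x y] by force

lemma val_above_uminus: "val_above m x \<Longrightarrow> val_above m (- x)"
  unfolding val_above_def using v_uminus by force

lemma val_above_of_nat_mult: "val_above m x \<Longrightarrow> val_above m (of_nat n * x)"
  unfolding val_above_def using v_mult[of "of_nat n" x] v_of_nat[of n] by force

lemma val_above_sum:
  "finite A \<Longrightarrow> (\<And>a. a \<in> A \<Longrightarrow> val_above m (g a)) \<Longrightarrow> val_above m (sum g A)"
  by (induction A rule: finite_induct) (auto simp: val_above_add, simp add: val_above_def)

lemma v_add_val_above:
  assumes "x \<noteq> 0" and "val_above (v x) y"
  shows "x + y \<noteq> 0" and "v (x + y) = v x"
proof -
  show nz: "x + y \<noteq> 0"
    using assms v_uminus by (force simp: val_above_def add_eq_0_iff)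
  show "v (x + y) = v x"
  proof (cases "y = 0")
    case False
    then have y: "v x < v y" using assms(2) by (simp add: val_above_def)
    have "v x \<le> v (x + y)"
      using v_add_ge_min[OF assms(1) False nz] y by simp
    moreover have "min (v (x + y)) (v (- y)) \<le> v x"
      using v_add_ge_min[of "x + y" "- y"] nz False assms(1) by simp
    ultimately show ?thesis using y v_uminus[OF False] by linarith
  qed simp
qed

text \<open>If the terms of a vanishing sum have a unique pair \<open>t \<alpha>, t \<beta>\<close> of minimal valuation, then
  \<open>t \<beta> \<approx> - t \<alpha>\<close>, so reweighting the terms by integers \<open>n\<close> with \<open>n \<alpha> \<noteq> n \<beta>\<close> leaves
  \<open>(n \<alpha> - n \<beta>) t \<alpha>\<close> as the dominant term.\<close>
lemma v_weighted_sum_two_dominant: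
  assumes K: "finite K" "\<alpha> \<in> K" "\<beta> \<in> K" "\<alpha> \<noteq> \<beta>"
    and sum0: "sum t K = 0" and t\<alpha>: "t \<alpha> \<noteq> 0"
    and rest: "\<And>\<gamma>. \<gamma> \<in> K - {\<alpha>, \<beta>} \<Longrightarrow> val_above (v (t \<alpha>)) (t \<gamma>)"
    and n: "n \<alpha> \<noteq> n \<beta>"
  shows "(\<Sum>\<gamma>\<in>K. of_nat (n \<gamma>) * t \<gamma>) \<noteq> 0" and "v (\<Sum>\<gamma>\<in>K. of_nat (n \<gamma>) * t \<gamma>) = v (t \<alpha>)"
proof -
  define R where "R = sum t (K - {\<alpha>, \<beta>})"
  define Rn where "Rn = (\<Sum>\<gamma>\<in>K - {\<alpha>, \<beta>}. of_nat (n \<gamma>) * t \<gamma>)"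
  define z where "z = of_int (int (n \<alpha>) - int (n \<beta>)) * t \<alpha>"
  have t\<beta>: "t \<beta> = - t \<alpha> - R"
    using sum0 sum_remove_two[OF K, of t] unfolding R_def by (simp add: eq_neg_iff_add_eq_0 algebra_simps)
  have "(\<Sum>\<gamma>\<in>K. of_nat (n \<gamma>) * t \<gamma>) = of_nat (n \<alpha>) * t \<alpha> + of_nat (n \<beta>) * t \<beta> + Rn"
    unfolding Rn_def by (rule sum_remove_two[OF K])
  also have "\<dots> = z + (of_nat (n \<beta>) * - R + Rn)"
    unfolding t\<beta> z_def by (simp add: algebra_simps)
  finally have eq: "(\<Sum>\<gamma>\<in>K. of_nat (n \<gamma>) * t \<gamma>) = z + (of_nat (n \<beta>) * - R + Rn)" .
  have "int (n \<alpha>) - int (n \<beta>) \<noteq> 0" using n by simp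
  then have z: "z \<noteq> 0" "v z = v (t \<alpha>)"
    using t\<alpha> v_mult[of "of_int (int (n \<alpha>) - int (n \<beta>))" "t \<alpha>"] v_of_int
    unfolding z_def by (simp_all only: of_int_eq_0_iff mult_eq_0_iff) simp_all
  have "val_above (v z) (of_nat (n \<beta>) * - R + Rn)"
    unfolding z(2) R_def Rn_def using K rest
    by (intro val_above_add val_above_of_nat_mult val_above_uminus val_above_sum) auto
  then show "(\<Sum>\<gamma>\<in>K. of_nat (n \<gamma>) * t \<gamma>) \<noteq> 0" "v (\<Sum>\<gamma>\<in>K. of_nat (n \<gamma>) * t \<gamma>) = v (t \<alpha>)"
    using v_add_val_above[OF z(1)] z(2) unfolding eq by auto
qed

end

section \<open>Monomials, partial derivatives and initial sets\<close>

lemma prod_atMost_3: "(\<Prod>j\<le>(3::nat). g j) = g 0 * g 1 * g 2 * g 3"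
  by (simp add: numeral_3_eq_3 numeral_2_eq_2 atMost_Suc mult_ac)

definition monomial4 :: "(nat \<Rightarrow> 'k::comm_ring_1) \<Rightarrow> (nat \<Rightarrow>\<^sub>0 nat) \<Rightarrow> 'k" where
  "monomial4 x \<alpha> = (\<Prod>j\<le>3. x j ^ Poly_Mapping.lookup \<alpha> j)"

lemma eval4_eq_sum_monomial4: "eval4 f x = (\<Sum>\<alpha>\<in>Poly_Mapping.keys f. Poly_Mapping.lookup f \<alpha> * monomial4 x \<alpha>)"
  unfolding eval4_def monomial4_def ..

lemma mult_partial_monomial4:
  assumes "i \<le> 3" and "0 < Poly_Mapping.lookup \<alpha> i"
  shows "x i * (\<Prod>j\<le>3. x j ^ (if j = i then Poly_Mapping.lookup \<alpha> j - 1 else Poly_Mapping.lookup \<alpha> j))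
    = monomial4 x \<alpha>"
proof -
  have i: "i \<in> {..3}" using assms(1) by simp
  have "x i * x i ^ (Poly_Mapping.lookup \<alpha> i - 1) = x i ^ Poly_Mapping.lookup \<alpha> i"
    using assms(2) by (cases "Poly_Mapping.lookup \<alpha> i") simp_all
  then show ?thesis
    unfolding monomial4_def prod.remove[OF finite_atMost i] by (simp add: mult.assoc[symmetric])
qed

lemma mult_deval4_eq_sum:
  assumes "i \<le> 3"
  shows "x i * deval4 i f x = (\<Sum>\<alpha>\<in>Poly_Mapping.keys f.
    of_nat (Poly_Mapping.lookup \<alpha> i) * (Poly_Mapping.lookup f \<alpha> * monomial4 x \<alpha>))"
  unfolding deval4_def sum_distrib_left
proof (rule sum.cong)
  fix \<alpha> :: "nat \<Rightarrow>\<^sub>0 nat"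
  define P where
    "P = (\<Prod>j\<le>3. x j ^ (if j = i then Poly_Mapping.lookup \<alpha> j - 1 else Poly_Mapping.lookup \<alpha> j))"
  have "x i * (Poly_Mapping.lookup f \<alpha> * of_nat (Poly_Mapping.lookup \<alpha> i) * P)
      = of_nat (Poly_Mapping.lookup \<alpha> i) * (Poly_Mapping.lookup f \<alpha> * (x i * P))"
    by (simp add: ac_simps)
  then show "x i * (Poly_Mapping.lookup f \<alpha> * of_nat (Poly_Mapping.lookup \<alpha> i) * P)
    = of_nat (Poly_Mapping.lookup \<alpha> i) * (Poly_Mapping.lookup f \<alpha> * monomial4 x \<alpha>)"
    using mult_partial_monomial4[OF assms, of \<alpha> x] unfolding P_def
    by (cases "Poly_Mapping.lookup \<alpha> i = 0") simp_all
qed simp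

lemma Xtorus_coord_nonzero: "x \<in> Xtorus f \<Longrightarrow> i \<le> 3 \<Longrightarrow> x i \<noteq> 0"
  unfolding Xtorus_def by (auto simp: le_Suc_eq numeral_3_eq_3 numeral_2_eq_2)

lemma monomial4_nonzero: "(x :: nat \<Rightarrow> 'k::idom) \<in> Xtorus f \<Longrightarrow> monomial4 x \<alpha> \<noteq> 0"
  unfolding monomial4_def by (auto simp: prod_zero_iff Xtorus_coord_nonzero)

lemma trop_term_eq_inner: "trop_term v f w \<gamma> = - v (Poly_Mapping.lookup f \<gamma>) + proj3 \<gamma> \<bullet> w"
  by (cases w) (simp add: trop_term_def proj3_def inner_prod_def)

lemma mem_init_set_iff:
  "\<gamma> \<in> init_set v f w \<longleftrightarrow>
    \<gamma> \<in> Poly_Mapping.keys f \<and> (\<forall>\<delta>\<in>Poly_Mapping.keys f. trop_term v f w \<delta> \<le> trop_term v f w \<gamma>)"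
proof
  assume "\<gamma> \<in> Poly_Mapping.keys f \<and> (\<forall>\<delta>\<in>Poly_Mapping.keys f. trop_term v f w \<delta> \<le> trop_term v f w \<gamma>)"
  moreover from this have "Max (trop_term v f w ` Poly_Mapping.keys f) = trop_term v f w \<gamma>"
    by (intro Max_eqI) auto
  ultimately show "\<gamma> \<in> init_set v f w" unfolding init_set_def by auto
qed (auto simp: init_set_def intro: Max_ge)

lemma trop_term_less_if_notin_init_set:
  assumes "\<alpha> \<in> init_set v f w" "\<gamma> \<in> Poly_Mapping.keys f" "\<gamma> \<notin> init_set v f w"
  shows "trop_term v f w \<gamma> < trop_term v f w \<alpha>"
proof -
  obtain \<delta> where "\<delta> \<in> Poly_Mapping.keys f" "trop_term v f w \<gamma> < trop_term v f w \<delta>"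
    using assms(2,3) by (auto simp: mem_init_set_iff not_le)
  moreover from this(1) have "trop_term v f w \<delta> \<le> trop_term v f w \<alpha>"
    using assms(1) by (simp add: mem_init_set_iff)
  ultimately show ?thesis by linarith
qed

context nonarch_valued_field
begin

lemma v_monomial4:
  assumes x: "x \<in> Xtorus f"
  shows "v (monomial4 x \<alpha>) = - (proj3 \<alpha> \<bullet> trop_pt v x)"
proof -
  have "monomial4 x \<alpha> = x 1 ^ Poly_Mapping.lookup \<alpha> 1 * x 2 ^ Poly_Mapping.lookup \<alpha> 2
      * x 3 ^ Poly_Mapping.lookup \<alpha> 3"
    using x unfolding monomial4_def Xtorus_def by (simp add: prod_atMost_3)
  moreover have "x 1 \<noteq> 0" "x 2 \<noteq> 0" "x 3 \<noteq> 0"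
    using Xtorus_coord_nonzero[OF x] by simp_all
  ultimately show ?thesis
    by (simp add: v_mult v_power proj3_def trop_pt_def inner_prod_def)
qed

lemma v_term_eq_trop_term:
  assumes "x \<in> Xtorus f" "\<alpha> \<in> Poly_Mapping.keys f"
  shows "- v (Poly_Mapping.lookup f \<alpha> * monomial4 x \<alpha>) = trop_term v f (trop_pt v x) \<alpha>"
  using assms v_mult[of "Poly_Mapping.lookup f \<alpha>" "monomial4 x \<alpha>"] monomial4_nonzero[OF assms(1)]
    v_monomial4[OF assms(1)]
  by (simp add: trop_term_eq_inner in_keys_iff)

text \<open>At a torus point whose tropicalization has initial set an edge \<open>{\<alpha>, \<beta>}\<close>, the two
  dominant terms of \<open>f\<close> nearly cancel, and those of \<open>x\<^sub>i \<partial>f/\<partial>x\<^sub>i\<close> do not.\<close>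
lemma v_deval4_at_edge:
  assumes x: "x \<in> Xtorus f" and init: "init_set v f (trop_pt v x) = {\<alpha>, \<beta>}" and "\<alpha> \<noteq> \<beta>"
    and i: "i \<le> 3" "Poly_Mapping.lookup \<alpha> i \<noteq> Poly_Mapping.lookup \<beta> i"
  shows "deval4 i f x \<noteq> 0" and "v (deval4 i f x) = v (Poly_Mapping.lookup f \<alpha> * monomial4 x \<alpha>) - v (x i)"
proof -
  define t where "t \<gamma> = Poly_Mapping.lookup f \<gamma> * monomial4 x \<gamma>" for \<gamma>
  have keys: "\<alpha> \<in> Poly_Mapping.keys f" "\<beta> \<in> Poly_Mapping.keys f"
    using init unfolding init_set_def by auto
  have "sum t (Poly_Mapping.keys f) = 0"
    using x unfolding t_def Xtorus_def eval4_eq_sum_monomial4 by simp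
  moreover have "t \<alpha> \<noteq> 0"
    using keys monomial4_nonzero[OF x] unfolding t_def by (simp add: in_keys_iff)
  moreover have "val_above (v (t \<alpha>)) (t \<gamma>)" if "\<gamma> \<in> Poly_Mapping.keys f - {\<alpha>, \<beta>}" for \<gamma>
  proof -
    have "trop_term v f (trop_pt v x) \<gamma> < trop_term v f (trop_pt v x) \<alpha>"
      using that init by (intro trop_term_less_if_notin_init_set) auto
    moreover have "\<gamma> \<in> Poly_Mapping.keys f" using that by simp
    ultimately show ?thesis
      using keys v_term_eq_trop_term[OF x] unfolding t_def val_above_def by (metis neg_less_iff_less)
  qed
  ultimately have "x i * deval4 i f x \<noteq> 0" and v_xd: "v (x i * deval4 i f x) = v (t \<alpha>)"
    using v_weighted_sum_two_dominant[OF finite_keys keys \<open>\<alpha> \<noteq> \<beta>\<close>, of t] i(2)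
    unfolding mult_deval4_eq_sum[OF i(1)] t_def by simp_all
  then show d: "deval4 i f x \<noteq> 0" by simp
  have "v (x i * deval4 i f x) = v (x i) + v (deval4 i f x)"
    using v_mult Xtorus_coord_nonzero[OF x i(1)] d by blast
  then show "v (deval4 i f x) = v (Poly_Mapping.lookup f \<alpha> * monomial4 x \<alpha>) - v (x i)"
    using v_xd unfolding t_def by simp
qed

end

section \<open>Cells of the tropical surface\<close>

lemma closed_trop_term_le: "closed {w. trop_term v f w \<delta> \<le> trop_term v f w \<alpha>}"
proof -
  have "{w. trop_term v f w \<delta> \<le> trop_term v f w \<alpha>} =
      {w. (proj3 \<delta> - proj3 \<alpha>) \<bullet> w \<le> v (Poly_Mapping.lookup f \<delta>) - v (Poly_Mapping.lookup f \<alpha>)}"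
    by (auto simp: trop_term_eq_inner inner_diff_left)
  then show ?thesis by (simp add: closed_halfspace_le)
qed

lemma trop_term_le_on_closure_cell:
  assumes "w \<in> closure {w. init_set v f w = S}" "\<alpha> \<in> S" "\<delta> \<in> Poly_Mapping.keys f"
  shows "trop_term v f w \<delta> \<le> trop_term v f w \<alpha>"
proof -
  have "{w. init_set v f w = S} \<subseteq> {w. trop_term v f w \<delta> \<le> trop_term v f w \<alpha>}"
    using assms(2,3) by (auto simp: mem_init_set_iff)
  then have "closure {w. init_set v f w = S} \<subseteq> {w. trop_term v f w \<delta> \<le> trop_term v f w \<alpha>}"
    by (rule closure_minimal) (rule closed_trop_term_le)
  then show ?thesis using assms(1) by blast
qed

lemma trop_term_affine_combination:
  "trop_term v f ((1 + t) *\<^sub>R p - t *\<^sub>R c) \<delta> = (1 + t) * trop_term v f p \<delta> - t * trop_term v f c \<delta>"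
  unfolding trop_term_eq_inner by (simp add: inner_diff_right algebra_simps)

lemma rel_interior_extend_beyond:
  fixes p c :: "'a::euclidean_space"
  assumes p: "p \<in> rel_interior F" and c: "c \<in> F"
  obtains t where "t > 0" "(1 + t) *\<^sub>R p - t *\<^sub>R c \<in> F"
proof -
  obtain e where e: "e > 0" and ball: "ball p e \<inter> affine hull F \<subseteq> F"
    using p unfolding mem_rel_interior_ball by blast
  define t where "t = e / (2 * (norm (c - p) + 1))"
  have t: "t > 0" unfolding t_def using e by (simp add: add_nonneg_pos)
  have "p \<in> F" using p rel_interior_subset by blast
  then have "(1 + t) *\<^sub>R p - t *\<^sub>R c \<in> affine hull F"
    using c mem_affine[OF affine_affine_hull, of p F c "1 + t" "- t"] by (simp add: hull_inc)
  moreover have "dist p ((1 + t) *\<^sub>R p - t *\<^sub>R c) = t * norm (c - p)"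
    using t by (simp add: dist_norm algebra_simps norm_minus_commute[of p c] flip: scaleR_diff_right)
  moreover have "t * norm (c - p) < e"
  proof -
    have "norm (c - p) / (2 * (norm (c - p) + 1)) < 1"
      by (simp add: divide_less_eq add_nonneg_pos)
    then have "e * (norm (c - p) / (2 * (norm (c - p) + 1))) < e"
      using mult_strict_left_mono e by fastforce
    then show ?thesis unfolding t_def by simp
  qed
  ultimately have "(1 + t) *\<^sub>R p - t *\<^sub>R c \<in> F" using ball by auto
  with t show ?thesis by (rule that)
qed

text \<open>Points of the relative interior see exactly the marked points of the dual subdivision
  cell: a monomial \<open>\<gamma> \<notin> S\<close> tied with \<open>S\<close> at \<open>p\<close> would win on the far side of \<open>p\<close>.\<close>
lemma init_set_rel_interior_cell:
  assumes F: "F = closure {w. init_set v f w = S}" and c: "init_set v f c = S" and "S \<noteq> {}"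
    and p: "p \<in> rel_interior F"
  shows "init_set v f p = S"
proof
  have pF: "p \<in> F" using p rel_interior_subset by blast
  have SK: "S \<subseteq> Poly_Mapping.keys f" using c unfolding init_set_def by blast
  then show "S \<subseteq> init_set v f p"
    using pF unfolding F by (auto simp: mem_init_set_iff intro: trop_term_le_on_closure_cell)
  show "init_set v f p \<subseteq> S"
  proof (rule ccontr)
    assume "\<not> init_set v f p \<subseteq> S"
    then obtain \<gamma> where \<gamma>p: "\<gamma> \<in> init_set v f p" and "\<gamma> \<notin> S" by blast
    obtain \<alpha> where \<alpha>: "\<alpha> \<in> S" using \<open>S \<noteq> {}\<close> by blast
    have \<gamma>K: "\<gamma> \<in> Poly_Mapping.keys f" using \<gamma>p unfolding init_set_def by blast
    have "trop_term v f p \<alpha> \<le> trop_term v f p \<gamma>"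
      using \<gamma>p \<alpha> SK by (auto simp: mem_init_set_iff)
    moreover have "trop_term v f p \<gamma> \<le> trop_term v f p \<alpha>"
      using pF \<alpha> \<gamma>K unfolding F by (rule trop_term_le_on_closure_cell)
    ultimately have at_p: "trop_term v f p \<gamma> = trop_term v f p \<alpha>" by simp
    have at_c: "trop_term v f c \<gamma> < trop_term v f c \<alpha>"
      using \<alpha> \<gamma>K \<open>\<gamma> \<notin> S\<close> unfolding c[symmetric] by (rule trop_term_less_if_notin_init_set)
    have "c \<in> F" unfolding F by (rule closure_subset[THEN subsetD]) (simp add: c)
    then obtain t where t: "t > 0" and z: "(1 + t) *\<^sub>R p - t *\<^sub>R c \<in> F"
      by (rule rel_interior_extend_beyond[OF p])
    have "trop_term v f ((1 + t) *\<^sub>R p - t *\<^sub>R c) \<gamma> \<le> trop_term v f ((1 + t) *\<^sub>R p - t *\<^sub>R c) \<alpha>"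
      using z \<alpha> \<gamma>K unfolding F by (rule trop_term_le_on_closure_cell)
    then have "t * (trop_term v f c \<alpha> - trop_term v f c \<gamma>) \<le> 0"
      unfolding trop_term_affine_combination at_p by (simp add: algebra_simps)
    moreover have "0 < t * (trop_term v f c \<alpha> - trop_term v f c \<gamma>)"
      using t at_c by simp
    ultimately show False by linarith
  qed
qed

lemma dim_lin_span_cell:
  assumes "p \<in> F"
  shows "int (dim (lin_span_cell F)) = aff_dim F"
proof -
  have "span {x - y |x y. x \<in> F \<and> y \<in> F} = span ((+) (- p) ` F)"
    unfolding span_eq
  proof
    show "{x - y |x y. x \<in> F \<and> y \<in> F} \<subseteq> span ((+) (- p) ` F)"
    proof
      fix z assume "z \<in> {x - y |x y. x \<in> F \<and> y \<in> F}"
      then obtain x y where "z = (- p + x) - (- p + y)" "x \<in> F" "y \<in> F" by auto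
      then show "z \<in> span ((+) (- p) ` F)"
        by (simp only:) (intro span_diff span_base imageI)
    qed
    show "(+) (- p) ` F \<subseteq> span {x - y |x y. x \<in> F \<and> y \<in> F}"
    proof
      fix z assume "z \<in> (+) (- p) ` F"
      then obtain x where "z = x - p" "x \<in> F" by auto
      then show "z \<in> span {x - y |x y. x \<in> F \<and> y \<in> F}"
        using assms by (intro span_base) blast
    qed
  qed
  then show ?thesis
    using aff_dim_eq_dim[OF hull_inc[OF assms]] unfolding lin_span_cell_def by (simp add: dim_span)
qed

lemma hyperplane_subset_imp_mem_span:
  fixes u w :: "'a::euclidean_space"
  assumes "{z. u \<bullet> z = 0} \<subseteq> {z. w \<bullet> z = 0}"
  shows "w \<in> span {u}"
proof -
  have "(span {u})\<^sup>\<bottom> = {z. u \<bullet> z = 0}"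
    by (auto simp: orthogonal_comp_def orthogonal_def span_singleton)
  then have "w \<in> (span {u})\<^sup>\<bottom>\<^sup>\<bottom>"
    using assms by (auto simp: orthogonal_comp_def orthogonal_def inner_commute)
  then show ?thesis by (simp add: orthogonal_comp_self)
qed

lemma affine_independent_collinear_eq:
  fixes a b c :: "'a::euclidean_space"
  assumes "\<not> affine_dependent A" "a \<in> A" "b \<in> A" "c \<in> A" "a - c \<in> span {a - b}"
  shows "c = a \<or> c = b"
proof (rule ccontr)
  assume c: "\<not> (c = a \<or> c = b)"
  obtain k where k: "a - c = k *\<^sub>R (a - b)" using assms(5) by (auto simp: span_singleton)
  then have "a \<noteq> b" using c by auto
  have "c - b = (1 - k) *\<^sub>R (a - b)" using k by (simp add: algebra_simps)
  then have "collinear {a, b, c}"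
    by (subst collinear_3) (auto simp: collinear_lemma)
  then have "affine_dependent {a, b, c}"
    using c \<open>a \<noteq> b\<close> by (auto simp: collinear_3_eq_affine_dependent)
  then show False
    using assms(1-4) affine_dependent_subset[of "{a, b, c}" A] by blast
qed

lemma trop_term_eq_on_closure_cell:
  assumes "w \<in> closure {w. init_set v f w = S}" "\<alpha> \<in> S" "\<beta> \<in> S" "S \<subseteq> Poly_Mapping.keys f"
  shows "trop_term v f w \<alpha> = trop_term v f w \<beta>"
  using trop_term_le_on_closure_cell[OF assms(1,2)] trop_term_le_on_closure_cell[OF assms(1,3)] assms(2-4)
  by (meson antisym subsetD)

lemma lin_span_cell_subset_hyperplane:
  assumes F: "F = closure {w. init_set v f w = S}" and "\<alpha> \<in> S" "\<beta> \<in> S" "S \<subseteq> Poly_Mapping.keys f"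
  shows "lin_span_cell F \<subseteq> {z. (proj3 \<alpha> - proj3 \<beta>) \<bullet> z = 0}"
  unfolding lin_span_cell_def
proof (rule span_minimal[OF subsetI subspace_hyperplane])
  fix z assume "z \<in> {x - y |x y. x \<in> F \<and> y \<in> F}"
  then obtain x y where z: "z = x - y" "x \<in> F" "y \<in> F" by blast
  then have "trop_term v f x \<alpha> = trop_term v f x \<beta>" "trop_term v f y \<alpha> = trop_term v f y \<beta>"
    using assms unfolding F by (auto intro: trop_term_eq_on_closure_cell)
  then show "z \<in> {z. (proj3 \<alpha> - proj3 \<beta>) \<bullet> z = 0}"
    unfolding z(1) trop_term_eq_inner by (simp add: inner_diff_left inner_diff_right algebra_simps)
qed

text \<open>The dual cell lies on the line normal to the plane of \<open>F\<close>; affine independence of its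
  marked points, which smoothness provides, leaves room for only two of them.\<close>
lemma two_dim_cell_dual_edge:
  assumes "trop_smooth v f" and "F \<in> trop_cells v f" and "aff_dim F = 2" and p: "p \<in> rel_interior F"
  obtains \<alpha> \<beta> where "\<alpha> \<noteq> \<beta>" "init_set v f p = {\<alpha>, \<beta>}"
    and "lin_span_cell F = {z. (proj3 \<alpha> - proj3 \<beta>) \<bullet> z = 0}"
proof -
  obtain S c where F: "F = closure {w. init_set v f w = S}" and c: "init_set v f c = S"
    and "2 \<le> card S"
    using assms(2) unfolding trop_cells_def by blast
  then obtain \<alpha> \<beta> where \<alpha>\<beta>: "\<alpha> \<in> S" "\<beta> \<in> S" "\<alpha> \<noteq> \<beta>"
    by (metis card_le_Suc_iff insertCI numeral_2_eq_2)
  have uni: "unimodular_simplex S" using assms(1) c unfolding trop_smooth_def by metis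
  have SK: "S \<subseteq> Poly_Mapping.keys f" using c unfolding init_set_def by blast
  have init_p: "init_set v f p = S"
    using init_set_rel_interior_cell[OF F c _ p] \<alpha>\<beta> by blast
  have "proj3 \<alpha> \<noteq> proj3 \<beta>"
    using uni \<alpha>\<beta> unfolding unimodular_simplex_def inj_on_def by blast
  then have "dim {z. (proj3 \<alpha> - proj3 \<beta>) \<bullet> z = 0} \<le> dim (lin_span_cell F)"
    using dim_lin_span_cell[OF rel_interior_subset[THEN subsetD, OF p]] assms(3)
    by (simp add: dim_hyperplane)
  then have L: "lin_span_cell F = {z. (proj3 \<alpha> - proj3 \<beta>) \<bullet> z = 0}"
    using lin_span_cell_subset_hyperplane[OF F \<alpha>\<beta>(1,2) SK]
    by (intro subspace_dim_equal subspace_hyperplane) (simp_all add: lin_span_cell_def)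
  have "\<gamma> \<in> {\<alpha>, \<beta>}" if "\<gamma> \<in> S" for \<gamma>
  proof -
    have "proj3 \<alpha> - proj3 \<gamma> \<in> span {proj3 \<alpha> - proj3 \<beta>}"
      using lin_span_cell_subset_hyperplane[OF F \<alpha>\<beta>(1) that SK]
      by (intro hyperplane_subset_imp_mem_span) (simp add: L)
    then have "proj3 \<gamma> = proj3 \<alpha> \<or> proj3 \<gamma> = proj3 \<beta>"
      using uni \<alpha>\<beta> that unfolding unimodular_simplex_def
      by (intro affine_independent_collinear_eq[of "proj3 ` S"]) auto
    then show ?thesis
      using uni \<alpha>\<beta> that unfolding unimodular_simplex_def inj_on_def by blast
  qed
  then have "init_set v f p = {\<alpha>, \<beta>}" using init_p \<alpha>\<beta> by blast
  from \<alpha>\<beta>(3) this L show ?thesis by (rule that)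
qed

lemma inner_proj3_diff_std_e:
  assumes "homogeneous_of_degree d f" "\<alpha> \<in> Poly_Mapping.keys f" "\<beta> \<in> Poly_Mapping.keys f"
    and "i \<le> 3" "Poly_Mapping.lookup \<alpha> i = Poly_Mapping.lookup \<beta> i"
  shows "(proj3 \<alpha> - proj3 \<beta>) \<bullet> std_e i = 0"
proof (cases "i = 0")
  case True
  have "(\<Sum>j\<le>3. Poly_Mapping.lookup \<alpha> j) = (\<Sum>j\<le>3. Poly_Mapping.lookup \<beta> j)"
    using assms(1-3) unfolding homogeneous_of_degree_def by simp
  then have "real (Poly_Mapping.lookup \<alpha> 1 + Poly_Mapping.lookup \<alpha> 2 + Poly_Mapping.lookup \<alpha> 3)
      = real (Poly_Mapping.lookup \<beta> 1 + Poly_Mapping.lookup \<beta> 2 + Poly_Mapping.lookup \<beta> 3)"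
    using assms(5) True by (simp add: numeral_3_eq_3 numeral_2_eq_2 atMost_Suc)
  then show ?thesis
    using True by (simp add: std_e_def proj3_def inner_prod_def algebra_simps)
next
  case False
  then have "i = 1 \<or> i = 2 \<or> i = 3" using assms(4) by auto
  then show ?thesis
    using assms(5) by (auto simp: std_e_def proj3_def inner_prod_def)
qed

theorem proposition1p10:
  fixes v :: "'k::field_char_0 \<Rightarrow> real" and f :: "'k mpoly" and d :: nat
    and F :: "(real \<times> real \<times> real) set" and p :: "real \<times> real \<times> real"
  assumes "alg_closed TYPE('k)"
    and "nonarch_valuation v"
    and "poly4 f" and "homogeneous_of_degree d f" and "involves_all_vars f"
    and "irreducible f"
    and "d \<ge> 2"
    and "\<not> is_cone f"
    and "trop_smooth v f"
    and "F \<in> trop_cells v f" and "aff_dim F = 2"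
    and "\<forall>i\<le>3. std_e i \<notin> lin_span_cell F"
    and "p \<in> rel_interior F"
  shows "\<forall>q. tropical_tangent v f p q \<longrightarrow> q = - p"
proof (intro allI impI)
  fix q assume "tropical_tangent v f p q"
  then obtain x where x: "x \<in> Xtorus f" "trop_pt v x = p"
    and q: "q = (- v (deval4 1 f x / deval4 0 f x), - v (deval4 2 f x / deval4 0 f x),
                 - v (deval4 3 f x / deval4 0 f x))"
    unfolding tropical_tangent_def by blast
  obtain \<alpha> \<beta> where "\<alpha> \<noteq> \<beta>" and init: "init_set v f p = {\<alpha>, \<beta>}"
    and L: "lin_span_cell F = {z. (proj3 \<alpha> - proj3 \<beta>) \<bullet> z = 0}"
    using two_dim_cell_dual_edge[OF assms(9-11,13)] .
  have keys: "\<alpha> \<in> Poly_Mapping.keys f" "\<beta> \<in> Poly_Mapping.keys f"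
    using init unfolding init_set_def by auto
  have differ: "Poly_Mapping.lookup \<alpha> i \<noteq> Poly_Mapping.lookup \<beta> i" if "i \<le> 3" for i
    using assms(12) inner_proj3_diff_std_e[OF assms(4) keys that] that unfolding L by auto
  interpret nonarch_valued_field v by (rule nonarch_valued_field.intro) (rule assms(2))
  have "v (deval4 i f x / deval4 0 f x) = - v (x i)" if "i \<le> 3" for i
  proof -
    have "deval4 j f x \<noteq> 0 \<and> v (deval4 j f x) = v (Poly_Mapping.lookup f \<alpha> * monomial4 x \<alpha>) - v (x j)"
      if "j \<le> 3" for j
      using v_deval4_at_edge[OF x(1) _ \<open>\<alpha> \<noteq> \<beta>\<close> that differ[OF that]] init x(2) by simp
    then show ?thesis
      using v_divide \<open>i \<le> 3\<close> x(1) v_one unfolding Xtorus_def by simp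
  qed
  then show "q = - p" unfolding q x(2)[symmetric] trop_pt_def by simp
qed

end
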